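(* Let $\mathcal{D}$ be a dyadic grid, $f\in L^2(\mathbb{R}^d)$ and $j\in\mathbb{N}_0$. For all $x\in\mathbb{R}^d$, \[ S_j^{\mathcal{D}}f(x)\le S_j^{3\mathcal{D}}f(x)\le 3^{d/2}S_j^{\mathcal{D}}f(x), \] where \[ \big(S_j^{\mathcal{D}}f(x)\big)^2=\sum_{Q\in\mathcal{D}}\sum_{\substack{P\in\mathcal{D},\,P\subset Q\\ \ell P=2^{-j}\ell Q}}\frac{\langle f,h_P\rangle^2}{|P|}\mathbf{1}_P(x),\qquad \big(S_j^{3\mathcal{D}}f(x)\big)^2=\sum_{R\in\mathcal{D}}\sum_{\substack{P\in\mathcal{D},\,P\subset 3R\\ \ell P=2^{-j}\ell R}}\frac{\langle f,h_P\rangle^2}{|P|}\mathbf{1}_P(x). \]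
   Context: A dyadic grid is the standard grid $\bigcup_j\{2^{-j}([0,1)^d+m):m\in\mathbb{Z}^d\}$ or a translate of it by $\omega\in(\{0,1\}^d)^{\mathbb{Z}}$. $3R$ is the cube concentric with $R$ of side $3\ell R$. For a dyadic cube $P=P_1\times\dots\times P_d$, the Haar functions are $h_P^\epsilon=\prod_ih_{P_i}^{\epsilon_i}$, $\epsilon\in\{0,1\}^d\setminus\{0\}^d$, where $h_I^0=|I|^{-1/2}\mathbf{1}_I$, $h_I^1=|I|^{-1/2}(\mathbf{1}_{I^-}-\mathbf{1}_{I^+})$; $\langle f,h_P\rangle^2:=\sum_\epsilon\langle f,h_P^\epsilon\rangle^2$. *)

theory Defs
  imports "HOL-Analysis.Analysis"
begin

text \<open>A dyadic cube is represented by the pair (corner a, side length s);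
  its point set is the half-open box [a, a + s)^d.\<close>

type_synonym 'n dcube = "(real^'n) \<times> real"

definition cube_set :: "'n::finite dcube \<Rightarrow> (real^'n) set" where
  "cube_set P = {x. \<forall>c. fst P $ c \<le> x $ c \<and> x $ c < fst P $ c + snd P}"

definition side :: "'n::finite dcube \<Rightarrow> real" where
  "side P = snd P"

definition vol :: "'n::finite dcube \<Rightarrow> real" where
  "vol P = snd P ^ CARD('n)"

definition triple :: "'n::finite dcube \<Rightarrow> 'n dcube" where
  "triple R = (fst R - (\<chi> c. snd R), 3 * snd R)"

definition grid_shift :: "(int \<Rightarrow> 'n::finite \<Rightarrow> bool) \<Rightarrow> int \<Rightarrow> real^'n" where
  "grid_shift \<omega> k = (\<chi> c. (\<Sum>n. 2 powr (- (real_of_int k + 1 + real n)) *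
        (if \<omega> (k + 1 + int n) c then 1 else 0)))"

definition dyadic_grid_of :: "(int \<Rightarrow> 'n::finite \<Rightarrow> bool) \<Rightarrow> 'n dcube set" where
  "dyadic_grid_of \<omega> = {((\<chi> c. 2 powr (- real_of_int k) * real_of_int (m c)) + grid_shift \<omega> k,
                          2 powr (- real_of_int k)) | k m. True}"

text \<open>Dyadic grids: the standard grid (omega = 0) or one of its translates.\<close>
definition is_dyadic_grid :: "'n::finite dcube set \<Rightarrow> bool" where
  "is_dyadic_grid D \<longleftrightarrow> (\<exists>\<omega>. D = dyadic_grid_of \<omega>)"

definition haar1 :: "real \<Rightarrow> real \<Rightarrow> bool \<Rightarrow> real \<Rightarrow> real" where
  "haar1 a s e t = (if e
     then s powr (-1/2) * (indicator {a..<a + s/2} t - indicator {a + s/2..<a + s} t)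
     else s powr (-1/2) * indicator {a..<a + s} t)"

definition haar :: "'n::finite dcube \<Rightarrow> ('n \<Rightarrow> bool) \<Rightarrow> real^'n \<Rightarrow> real" where
  "haar P \<epsilon> x = (\<Prod>c\<in>UNIV. haar1 (fst P $ c) (snd P) (\<epsilon> c) (x $ c))"

text \<open>\<langle>f,h_P\<rangle>^2 = sum over epsilon \<noteq> 0 of \<langle>f,h_P^epsilon\<rangle>^2.\<close>
definition haar_coeff_sq :: "(real^'n::finite \<Rightarrow> real) \<Rightarrow> 'n dcube \<Rightarrow> real" where
  "haar_coeff_sq f P = (\<Sum>\<epsilon>\<in>{\<epsilon>. \<epsilon> \<noteq> (\<lambda>_. False)}.
      (integral\<^sup>L lebesgue (\<lambda>x. f x * haar P \<epsilon> x))\<^sup>2)"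

definition term_P :: "(real^'n::finite \<Rightarrow> real) \<Rightarrow> 'n dcube \<Rightarrow> real^'n \<Rightarrow> ennreal" where
  "term_P f P x = ennreal (haar_coeff_sq f P / vol P * indicator (cube_set P) x)"

definition SD_sq :: "'n::finite dcube set \<Rightarrow> (real^'n \<Rightarrow> real) \<Rightarrow> nat \<Rightarrow> real^'n \<Rightarrow> ennreal" where
  "SD_sq D f j x = (\<Sum>\<^sub>\<infinity>Q\<in>D. \<Sum>\<^sub>\<infinity>P\<in>{P\<in>D. cube_set P \<subseteq> cube_set Q \<and> side P = 2 powr (- real j) * side Q}.
      term_P f P x)"

definition S3D_sq :: "'n::finite dcube set \<Rightarrow> (real^'n \<Rightarrow> real) \<Rightarrow> nat \<Rightarrow> real^'n \<Rightarrow> ennreal" where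
  "S3D_sq D f j x = (\<Sum>\<^sub>\<infinity>R\<in>D. \<Sum>\<^sub>\<infinity>P\<in>{P\<in>D. cube_set P \<subseteq> cube_set (triple R) \<and> side P = 2 powr (- real j) * side R}.
      term_P f P x)"

definition enn_sqrt :: "ennreal \<Rightarrow> ennreal" where
  "enn_sqrt t = (if t = top then top else ennreal (sqrt (enn2real t)))"

definition SD :: "'n::finite dcube set \<Rightarrow> (real^'n \<Rightarrow> real) \<Rightarrow> nat \<Rightarrow> real^'n \<Rightarrow> ennreal" where
  "SD D f j x = enn_sqrt (SD_sq D f j x)"

definition S3D :: "'n::finite dcube set \<Rightarrow> (real^'n \<Rightarrow> real) \<Rightarrow> nat \<Rightarrow> real^'n \<Rightarrow> ennreal" where
  "S3D D f j x = enn_sqrt (S3D_sq D f j x)"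

end

theory Submission
  imports Defs
begin

text \<open>After exchanging the order of summation, both squared square functions sum the terms
  \<open>\<langle>f,h\<^sub>P\<rangle>\<^sup>2/|P| 1\<^sub>P(x)\<close> over \<open>P \<in> D\<close>, weighted by the number of cubes \<open>R \<in> D\<close> of side
  \<open>2\<^sup>j side(P)\<close> with \<open>P \<subseteq> R\<close>, respectively \<open>P \<subseteq> 3R\<close>. Since \<open>R \<subseteq> 3R\<close> the first weight is at most
  the second. Every \<open>P\<close> has an ancestor \<open>Q\<close> of that side, so the first weight is at least one,
  while same-side cubes of a grid form a lattice, so every \<open>R\<close> with \<open>P \<subseteq> 3R\<close> is one of the
  \<open>3\<^sup>d\<close> neighbours \<open>Q + side(Q) z\<close>, \<open>z \<in> {-1,0,1}\<^sup>d\<close>: the second weight is at most \<open>3\<^sup>d\<close>.\<close>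

text \<open>The library fact \<open>summable_on_ennreal\<close> is, through a coercion, about \<open>enat\<close>-valued functions.\<close>

lemma summable_on_ennreal_valued [simp]: "(f :: 'a \<Rightarrow> ennreal) summable_on A"
  by (simp add: nonneg_summable_on_complete)

lemma infsum_mono_set_ennreal:
  fixes f :: "'a \<Rightarrow> ennreal"
  assumes "A \<subseteq> B"
  shows "infsum f A \<le> infsum f B"
  by (rule infsum_mono_neutral) (use assms in auto)

lemma infsum_cmult_right_ennreal:
  fixes f :: "'a \<Rightarrow> ennreal"
  shows "(\<Sum>\<^sub>\<infinity>x\<in>A. c * f x) = c * (\<Sum>\<^sub>\<infinity>x\<in>A. f x)"
  by (simp add: nonneg_infsum_complete sum_distrib_left SUP_mult_left_ennreal image_image)

lemma sum_infsum_Sigma_ennreal: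
  fixes f :: "'a \<Rightarrow> 'b \<Rightarrow> ennreal"
  assumes "finite A"
  shows "(\<Sum>x\<in>A. \<Sum>\<^sub>\<infinity>y\<in>B x. f x y) = (\<Sum>\<^sub>\<infinity>(x,y)\<in>Sigma A B. f x y)"
proof -
  have "((\<lambda>(x,y). f x y) has_sum (\<Sum>x\<in>A. \<Sum>\<^sub>\<infinity>y\<in>B x. f x y)) (\<Union>x\<in>A. Pair x ` B x)"
  proof (rule sum_has_sum[OF assms])
    fix x
    have "((\<lambda>(x,y). f x y) \<circ> Pair x has_sum (\<Sum>\<^sub>\<infinity>y\<in>B x. f x y)) (B x)"
      by (simp add: o_def has_sum_infsum)
    then show "((\<lambda>(x,y). f x y) has_sum (\<Sum>\<^sub>\<infinity>y\<in>B x. f x y)) (Pair x ` B x)"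
      by (subst has_sum_reindex) (auto intro: inj_onI)
  qed auto
  moreover have "(\<Union>x\<in>A. Pair x ` B x) = Sigma A B" by auto
  ultimately show ?thesis by (simp add: infsumI)
qed

text \<open>\<open>has_sum_SigmaD\<close> does not apply here, as \<open>ennreal\<close> is not an instance of \<open>t3_space\<close>.\<close>

lemma infsum_Sigma_ennreal:
  fixes f :: "'a \<Rightarrow> 'b \<Rightarrow> ennreal"
  shows "(\<Sum>\<^sub>\<infinity>x\<in>A. \<Sum>\<^sub>\<infinity>y\<in>B x. f x y) = (\<Sum>\<^sub>\<infinity>(x,y)\<in>Sigma A B. f x y)"
proof (rule antisym)
  show "(\<Sum>\<^sub>\<infinity>x\<in>A. \<Sum>\<^sub>\<infinity>y\<in>B x. f x y) \<le> (\<Sum>\<^sub>\<infinity>(x,y)\<in>Sigma A B. f x y)"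
    unfolding nonneg_infsum_complete[of A "\<lambda>x. \<Sum>\<^sub>\<infinity>y\<in>B x. f x y", simplified]
  proof (rule SUP_least, clarify)
    fix H assume H: "finite H" "H \<subseteq> A"
    then have "(\<Sum>x\<in>H. \<Sum>\<^sub>\<infinity>y\<in>B x. f x y) = (\<Sum>\<^sub>\<infinity>(x,y)\<in>Sigma H B. f x y)"
      by (simp add: sum_infsum_Sigma_ennreal)
    also have "\<dots> \<le> (\<Sum>\<^sub>\<infinity>(x,y)\<in>Sigma A B. f x y)"
      using H by (intro infsum_mono_set_ennreal) auto
    finally show "(\<Sum>x\<in>H. \<Sum>\<^sub>\<infinity>y\<in>B x. f x y) \<le> (\<Sum>\<^sub>\<infinity>(x,y)\<in>Sigma A B. f x y)" .
  qed
  show "(\<Sum>\<^sub>\<infinity>(x,y)\<in>Sigma A B. f x y) \<le> (\<Sum>\<^sub>\<infinity>x\<in>A. \<Sum>\<^sub>\<infinity>y\<in>B x. f x y)"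
    unfolding nonneg_infsum_complete[of "Sigma A B" "\<lambda>(x,y). f x y", simplified]
  proof (rule SUP_least, clarify)
    fix F assume F: "finite F" "F \<subseteq> Sigma A B"
    then have "(\<Sum>p\<in>F. case p of (x, y) \<Rightarrow> f x y) = (\<Sum>\<^sub>\<infinity>(x,y)\<in>F. f x y)"
      by simp
    also have "\<dots> \<le> (\<Sum>\<^sub>\<infinity>(x,y)\<in>Sigma (fst ` F) B. f x y)"
      using F by (intro infsum_mono_set_ennreal) force
    also have "\<dots> = (\<Sum>x\<in>fst ` F. \<Sum>\<^sub>\<infinity>y\<in>B x. f x y)"
      using F by (simp add: sum_infsum_Sigma_ennreal)
    also have "\<dots> = (\<Sum>\<^sub>\<infinity>x\<in>fst ` F. \<Sum>\<^sub>\<infinity>y\<in>B x. f x y)"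
      using F by simp
    also have "\<dots> \<le> (\<Sum>\<^sub>\<infinity>x\<in>A. \<Sum>\<^sub>\<infinity>y\<in>B x. f x y)"
      using F by (intro infsum_mono_set_ennreal) auto
    finally show "(\<Sum>p\<in>F. case p of (x, y) \<Rightarrow> f x y) \<le> (\<Sum>\<^sub>\<infinity>x\<in>A. \<Sum>\<^sub>\<infinity>y\<in>B x. f x y)" .
  qed
qed

lemma infsum_swap_ennreal:
  fixes f :: "'a \<Rightarrow> 'b \<Rightarrow> ennreal"
  shows "(\<Sum>\<^sub>\<infinity>x\<in>A. \<Sum>\<^sub>\<infinity>y\<in>B. f x y) = (\<Sum>\<^sub>\<infinity>y\<in>B. \<Sum>\<^sub>\<infinity>x\<in>A. f x y)"
proof -
  have "(\<Sum>\<^sub>\<infinity>(x,y)\<in>A \<times> B. f x y) = (\<Sum>\<^sub>\<infinity>(y,x)\<in>B \<times> A. f x y)"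
    by (rule infsumI, subst has_sum_swap) (simp add: has_sum_infsum)
  then show ?thesis by (simp add: infsum_Sigma_ennreal)
qed

lemma infsum_filter_swap_ennreal:
  fixes f :: "'a \<Rightarrow> 'b \<Rightarrow> ennreal"
  shows "(\<Sum>\<^sub>\<infinity>x\<in>A. \<Sum>\<^sub>\<infinity>y\<in>{y\<in>B. r x y}. f x y) = (\<Sum>\<^sub>\<infinity>y\<in>B. \<Sum>\<^sub>\<infinity>x\<in>{x\<in>A. r x y}. f x y)"
proof -
  have restrict: "(\<Sum>\<^sub>\<infinity>z\<in>{z\<in>Z. P z}. g z) = (\<Sum>\<^sub>\<infinity>z\<in>Z. if P z then g z else 0)"
    for Z P and g :: "_ \<Rightarrow> ennreal"
    by (rule infsum_cong_neutral) auto
  show ?thesis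
    unfolding restrict by (rule infsum_swap_ennreal)
qed

lemma infsum_double_counting_le_ennreal:
  fixes h :: "'a \<Rightarrow> ennreal"
  assumes few: "\<And>P. P \<in> D \<Longrightarrow> finite {R\<in>D. r R P} \<and> card {R\<in>D. r R P} \<le> N"
    and some: "\<And>P. P \<in> D \<Longrightarrow> \<exists>R\<in>D. r' R P"
  shows "(\<Sum>\<^sub>\<infinity>R\<in>D. \<Sum>\<^sub>\<infinity>P\<in>{P\<in>D. r R P}. h P)
    \<le> of_nat N * (\<Sum>\<^sub>\<infinity>R\<in>D. \<Sum>\<^sub>\<infinity>P\<in>{P\<in>D. r' R P}. h P)"
proof -
  have "(\<Sum>\<^sub>\<infinity>R\<in>D. \<Sum>\<^sub>\<infinity>P\<in>{P\<in>D. r R P}. h P) = (\<Sum>\<^sub>\<infinity>P\<in>D. \<Sum>\<^sub>\<infinity>R\<in>{R\<in>D. r R P}. h P)"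
    by (rule infsum_filter_swap_ennreal)
  also have "\<dots> \<le> (\<Sum>\<^sub>\<infinity>P\<in>D. of_nat N * h P)"
  proof (rule infsum_mono)
    fix P assume "P \<in> D"
    with few have "(\<Sum>\<^sub>\<infinity>R\<in>{R\<in>D. r R P}. h P) = of_nat (card {R\<in>D. r R P}) * h P"
      by simp
    also have "\<dots> \<le> of_nat N * h P"
      using few[OF \<open>P \<in> D\<close>] by (intro mult_right_mono) auto
    finally show "(\<Sum>\<^sub>\<infinity>R\<in>{R\<in>D. r R P}. h P) \<le> of_nat N * h P" .
  qed auto
  also have "\<dots> = of_nat N * (\<Sum>\<^sub>\<infinity>P\<in>D. h P)"
    by (rule infsum_cmult_right_ennreal)
  also have "(\<Sum>\<^sub>\<infinity>P\<in>D. h P) \<le> (\<Sum>\<^sub>\<infinity>P\<in>D. \<Sum>\<^sub>\<infinity>R\<in>{R\<in>D. r' R P}. h P)"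
  proof (rule infsum_mono)
    fix P assume "P \<in> D"
    then obtain R where "R \<in> {R\<in>D. r' R P}" using some by blast
    then have "(\<Sum>\<^sub>\<infinity>R\<in>{R}. h P) \<le> (\<Sum>\<^sub>\<infinity>R\<in>{R\<in>D. r' R P}. h P)"
      by (intro infsum_mono_set_ennreal) auto
    then show "h P \<le> (\<Sum>\<^sub>\<infinity>R\<in>{R\<in>D. r' R P}. h P)" by simp
  qed auto
  also have "(\<Sum>\<^sub>\<infinity>P\<in>D. \<Sum>\<^sub>\<infinity>R\<in>{R\<in>D. r' R P}. h P) = (\<Sum>\<^sub>\<infinity>R\<in>D. \<Sum>\<^sub>\<infinity>P\<in>{P\<in>D. r' R P}. h P)"
    by (rule infsum_filter_swap_ennreal[symmetric])
  finally show ?thesis by (simp add: mult_left_mono)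
qed

lemma enn_sqrt_mono:
  assumes "a \<le> b"
  shows "enn_sqrt a \<le> enn_sqrt b"
proof (cases "b = top")
  case False
  with assms have "a \<noteq> top" and "enn2real a \<le> enn2real b"
    by (auto simp: top_unique enn2real_mono top.not_eq_extremum)
  with False show ?thesis by (simp add: enn_sqrt_def)
qed (simp add: enn_sqrt_def)

lemma enn_sqrt_ennreal:
  assumes "x \<ge> 0"
  shows "enn_sqrt (ennreal x) = ennreal (sqrt x)"
  using assms by (simp add: enn_sqrt_def)

lemma enn_sqrt_cmult:
  assumes "c \<ge> 0"
  shows "enn_sqrt (ennreal c * a) = ennreal (sqrt c) * enn_sqrt a"
proof (cases a)
  case (real a')
  then have "enn_sqrt (ennreal c * a) = ennreal (sqrt (c * a'))"
    using assms by (simp only: ennreal_mult[symmetric] enn_sqrt_ennreal mult_nonneg_nonneg)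
  also have "\<dots> = ennreal (sqrt c) * enn_sqrt a"
    using assms real by (simp add: real_sqrt_mult ennreal_mult enn_sqrt_ennreal)
  finally show ?thesis .
next
  case top
  with assms show ?thesis
    by (simp add: enn_sqrt_def ennreal_mult_top)
qed

lemma cube_set_subset_iff:
  fixes P Q :: "'n::finite dcube"
  assumes "snd P > 0"
  shows "cube_set P \<subseteq> cube_set Q \<longleftrightarrow>
    (\<forall>c. fst Q $ c \<le> fst P $ c \<and> fst P $ c + snd P \<le> fst Q $ c + snd Q)"
proof
  assume sub: "cube_set P \<subseteq> cube_set Q"
  show "\<forall>c. fst Q $ c \<le> fst P $ c \<and> fst P $ c + snd P \<le> fst Q $ c + snd Q"
  proof
    fix c
    have "fst P \<in> cube_set Q" using sub assms by (auto simp: cube_set_def)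
    then have lower: "fst Q $ c \<le> fst P $ c" by (simp add: cube_set_def)
    have "fst P $ c + snd P \<le> fst Q $ c + snd Q"
    proof (rule ccontr)
      assume far: "\<not> fst P $ c + snd P \<le> fst Q $ c + snd Q"
      define y :: "real^'n" where "y = (\<chi> i. if i = c then max (fst P $ c) (fst Q $ c + snd Q) else fst P $ i)"
      have "y \<in> cube_set P"
        using assms far by (auto simp: cube_set_def y_def)
      with sub have "y $ c < fst Q $ c + snd Q" by (auto simp: cube_set_def)
      then show False by (simp add: y_def)
    qed
    with lower show "fst Q $ c \<le> fst P $ c \<and> fst P $ c + snd P \<le> fst Q $ c + snd Q" ..
  qed
next
  assume bounds: "\<forall>c. fst Q $ c \<le> fst P $ c \<and> fst P $ c + snd P \<le> fst Q $ c + snd Q"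
  show "cube_set P \<subseteq> cube_set Q"
  proof
    fix y assume "y \<in> cube_set P"
    then have "fst P $ c \<le> y $ c \<and> y $ c < fst P $ c + snd P" for c
      by (simp add: cube_set_def)
    with bounds have "fst Q $ c \<le> y $ c \<and> y $ c < fst Q $ c + snd Q" for c
      by (smt (verit))
    then show "y \<in> cube_set Q"
      by (simp add: cube_set_def)
  qed
qed

lemma cube_set_subset_triple: "cube_set Q \<subseteq> cube_set (triple Q)"
proof
  fix y assume "y \<in> cube_set Q"
  then have "fst Q $ c \<le> y $ c \<and> y $ c < fst Q $ c + snd Q" for c
    by (simp add: cube_set_def)
  then have "fst Q $ c - snd Q \<le> y $ c \<and> y $ c < fst Q $ c - snd Q + 3 * snd Q" for c
    by (smt (verit))
  then show "y \<in> cube_set (triple Q)"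
    by (simp add: cube_set_def triple_def)
qed

lemma side_eq_powr_iff: "side P = 2 powr (- real j) * side Q \<longleftrightarrow> snd Q = 2 ^ j * snd P"
  by (auto simp: side_def powr_minus powr_realpow field_simps)

lemma summable_dyadic_digits:
  "summable (\<lambda>n. 2 powr (- (a + real n)) * (if b n then 1 else 0 :: real))"
proof (rule summable_comparison_test')
  show "summable (\<lambda>n. 2 powr (- a) * (1/2 :: real) ^ n)"
    by (intro summable_mult summable_geometric) simp
  show "norm (2 powr (- (a + real n)) * (if b n then 1 else 0)) \<le> 2 powr (- a) * (1/2) ^ n" for n
  proof -
    have "2 powr (- (a + real n)) = 2 powr (- a) * 2 powr (- real n)"
      by (simp add: powr_add [symmetric])
    also have "2 powr (- real n) = (1/2 :: real) ^ n"
      by (simp add: powr_minus powr_realpow power_one_over inverse_eq_divide)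
    finally show ?thesis by simp
  qed
qed

lemma grid_shift_pred:
  "grid_shift \<omega> (k - 1) $ c = 2 powr (- real_of_int k) * (if \<omega> k c then 1 else 0) + grid_shift \<omega> k $ c"
proof -
  define d where "d n = 2 powr (- (real_of_int k + real n)) * (if \<omega> (k + int n) c then 1 else 0 :: real)" for n
  have "summable d" unfolding d_def by (rule summable_dyadic_digits)
  then have "(\<Sum>n. d n) = d 0 + (\<Sum>n. d (Suc n))"
    by (simp add: suminf_split_head)
  moreover have "d n = 2 powr (- (real_of_int (k - 1) + 1 + real n)) * (if \<omega> (k - 1 + 1 + int n) c then 1 else 0)" for n
    by (simp add: d_def)
  then have "grid_shift \<omega> (k - 1) $ c = (\<Sum>n. d n)"
    by (simp only: grid_shift_def vec_lambda_beta)
  moreover have "d (Suc n) = 2 powr (- (real_of_int k + 1 + real n)) * (if \<omega> (k + 1 + int n) c then 1 else 0)" for n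
    by (simp add: d_def algebra_simps)
  then have "grid_shift \<omega> k $ c = (\<Sum>n. d (Suc n))"
    by (simp only: grid_shift_def vec_lambda_beta)
  ultimately show ?thesis by (simp add: d_def)
qed

definition grid_cube :: "(int \<Rightarrow> 'n::finite \<Rightarrow> bool) \<Rightarrow> int \<Rightarrow> ('n \<Rightarrow> int) \<Rightarrow> 'n dcube" where
  "grid_cube \<omega> k m = ((\<chi> c. 2 powr (- real_of_int k) * real_of_int (m c)) + grid_shift \<omega> k,
     2 powr (- real_of_int k))"

lemma mem_dyadic_grid_of_iff: "P \<in> dyadic_grid_of \<omega> \<longleftrightarrow> (\<exists>k m. P = grid_cube \<omega> k m)"
  by (auto simp: dyadic_grid_of_def grid_cube_def)

lemma snd_grid_cube [simp]: "snd (grid_cube \<omega> k m) = 2 powr (- real_of_int k)"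
  by (simp add: grid_cube_def)

lemma fst_grid_cube_nth [simp]:
  "fst (grid_cube \<omega> k m) $ c = 2 powr (- real_of_int k) * real_of_int (m c) + grid_shift \<omega> k $ c"
  by (simp add: grid_cube_def)

lemma dyadic_grid_of_side_pos: "P \<in> dyadic_grid_of \<omega> \<Longrightarrow> snd P > 0"
  by (auto simp: mem_dyadic_grid_of_iff)

text \<open>Passing to the parent moves the \<open>k\<close>-th binary digit of the translation \<open>\<omega>\<close> from the
  shift into the integer coordinates.\<close>

lemma grid_cube_subset_parent:
  fixes \<omega> :: "int \<Rightarrow> 'n::finite \<Rightarrow> bool" and k :: int
  defines "w c \<equiv> if \<omega> k c then 1 else 0"
  shows "cube_set (grid_cube \<omega> k m) \<subseteq> cube_set (grid_cube \<omega> (k - 1) (\<lambda>c. (m c - w c) div 2))"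
proof -
  define e :: real where "e = 2 powr (- real_of_int k)"
  have "e > 0" by (simp add: e_def)
  have scale: "e * real_of_int a \<le> e * real_of_int b" if "a \<le> b" for a b
    using \<open>e > 0\<close> that by simp
  have "fst (grid_cube \<omega> (k - 1) (\<lambda>c. (m c - w c) div 2)) $ c
          \<le> fst (grid_cube \<omega> k m) $ c \<and>
        fst (grid_cube \<omega> k m) $ c + e
          \<le> fst (grid_cube \<omega> (k - 1) (\<lambda>c. (m c - w c) div 2)) $ c + 2 * e" for c
  proof -
    let ?m' = "(m c - w c) div 2"
    have parent: "fst (grid_cube \<omega> (k - 1) (\<lambda>c. (m c - w c) div 2)) $ c
        = e * real_of_int (2 * ?m' + w c) + grid_shift \<omega> k $ c"
      by (cases "\<omega> k c") (simp_all add: grid_shift_pred e_def w_def powr_diff powr_minus field_simps)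
    have child: "fst (grid_cube \<omega> k m) $ c = e * real_of_int (m c) + grid_shift \<omega> k $ c"
      by (simp add: e_def)
    have "2 * ?m' + w c \<le> m c" and "m c + 1 \<le> 2 * ?m' + w c + 2"
      by (auto simp: w_def)
    from this[THEN scale] show ?thesis
      unfolding parent child by (simp add: algebra_simps)
  qed
  moreover have "snd (grid_cube \<omega> (k - 1) (\<lambda>c. (m c - w c) div 2)) = 2 * e"
    by (simp add: e_def powr_diff powr_minus field_simps)
  ultimately show ?thesis
    using \<open>e > 0\<close> by (simp add: cube_set_subset_iff e_def)
qed

lemma dyadic_grid_of_parent:
  assumes "P \<in> dyadic_grid_of \<omega>"
  shows "\<exists>Q\<in>dyadic_grid_of \<omega>. cube_set P \<subseteq> cube_set Q \<and> snd Q = 2 * snd P"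
proof -
  obtain k m where P: "P = grid_cube \<omega> k m"
    using assms by (auto simp: mem_dyadic_grid_of_iff)
  let ?Q = "grid_cube \<omega> (k - 1) (\<lambda>c. (m c - (if \<omega> k c then 1 else 0)) div 2)"
  have "?Q \<in> dyadic_grid_of \<omega>" by (auto simp: mem_dyadic_grid_of_iff)
  moreover have "snd ?Q = 2 * snd P"
    by (simp add: P powr_diff powr_minus field_simps)
  ultimately show ?thesis
    using grid_cube_subset_parent unfolding P by blast
qed

lemma dyadic_grid_of_ancestor:
  assumes "P \<in> dyadic_grid_of \<omega>"
  shows "\<exists>Q\<in>dyadic_grid_of \<omega>. cube_set P \<subseteq> cube_set Q \<and> snd Q = 2 ^ j * snd P"
proof (induction j)
  case 0
  with assms show ?case by auto
next
  case (Suc j)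
  then obtain Q where Q: "Q \<in> dyadic_grid_of \<omega>" "cube_set P \<subseteq> cube_set Q" "snd Q = 2 ^ j * snd P"
    by blast
  obtain Q' where Q': "Q' \<in> dyadic_grid_of \<omega>" "cube_set Q \<subseteq> cube_set Q'" "snd Q' = 2 * snd Q"
    using dyadic_grid_of_parent[OF Q(1)] by blast
  show ?case
    using Q Q' by (intro bexI[of _ Q']) auto
qed

lemma dyadic_grid_of_same_side:
  assumes "R \<in> dyadic_grid_of \<omega>" "Q \<in> dyadic_grid_of \<omega>" "snd R = snd Q"
  shows "\<exists>z. \<forall>c. fst R $ c = fst Q $ c + snd Q * real_of_int (z c)"
proof -
  obtain k m k' m' where R: "R = grid_cube \<omega> k m" and Q: "Q = grid_cube \<omega> k' m'"
    using assms(1,2) by (auto simp: mem_dyadic_grid_of_iff)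
  with assms(3) have "k = k'"
    by (simp add: powr_inj)
  then show ?thesis
    by (intro exI[of _ "\<lambda>c. m c - m' c"]) (simp add: R Q algebra_simps)
qed

lemma triple_offset_bound:
  fixes P Q R :: "'n::finite dcube"
  assumes "snd P > 0" "cube_set P \<subseteq> cube_set Q" "cube_set P \<subseteq> cube_set (triple R)"
    and "snd R = snd Q" "fst R $ c = fst Q $ c + snd Q * real_of_int z"
  shows "z \<in> {-1, 0, 1}"
proof -
  have inQ: "fst Q $ c \<le> fst P $ c \<and> fst P $ c + snd P \<le> fst Q $ c + snd Q"
    using assms(1,2) by (simp add: cube_set_subset_iff)
  have in3R: "fst R $ c - snd R \<le> fst P $ c \<and> fst P $ c + snd P \<le> fst R $ c - snd R + 3 * snd R"
    using assms(1,3) by (simp add: cube_set_subset_iff triple_def)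
  have "snd Q * real_of_int z < snd Q * 2" and "snd Q * (- 2) < snd Q * real_of_int z"
    using inQ in3R assms(1,4,5) by linarith+
  moreover have "snd Q > 0"
    using inQ assms(1) by linarith
  ultimately have "real_of_int z < 2" "- 2 < real_of_int z"
    by (simp_all only: mult_less_cancel_left_pos)
  then have "z < 2" "- 2 < z"
    by linarith+
  then show ?thesis by auto
qed

lemma card_triple_ancestors_le:
  fixes P :: "'n::finite dcube" and j :: nat
  assumes "P \<in> dyadic_grid_of \<omega>"
  defines "A \<equiv> {R \<in> dyadic_grid_of \<omega>. cube_set P \<subseteq> cube_set (triple R) \<and> snd R = 2 ^ j * snd P}"
  shows "finite A \<and> card A \<le> 3 ^ CARD('n)"
proof -
  obtain Q where Q: "Q \<in> dyadic_grid_of \<omega>" "cube_set P \<subseteq> cube_set Q" "snd Q = 2 ^ j * snd P"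
    using dyadic_grid_of_ancestor[OF assms(1)] by blast
  define Z where "Z = (UNIV :: 'n set) \<rightarrow>\<^sub>E {-1, 0, 1 :: int}"
  define neighbour where "neighbour z = (fst Q + (\<chi> c. snd Q * real_of_int (z c)), snd Q)" for z
  have "A \<subseteq> neighbour ` Z"
  proof
    fix R assume "R \<in> A"
    then have R: "R \<in> dyadic_grid_of \<omega>" "cube_set P \<subseteq> cube_set (triple R)" "snd R = snd Q"
      using Q(3) by (auto simp: A_def)
    then obtain z where z: "\<forall>c. fst R $ c = fst Q $ c + snd Q * real_of_int (z c)"
      using dyadic_grid_of_same_side[OF R(1) Q(1)] by blast
    have "z c \<in> {-1, 0, 1}" for c
      using triple_offset_bound[OF dyadic_grid_of_side_pos[OF assms(1)] Q(2) R(2,3)] z by blast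
    then have "z \<in> Z" by (auto simp: Z_def)
    moreover have "R = neighbour z"
      using z R(3) by (simp add: neighbour_def prod_eq_iff vec_eq_iff)
    ultimately show "R \<in> neighbour ` Z" by blast
  qed
  moreover have "finite Z" "card Z = 3 ^ CARD('n)"
    by (simp_all add: Z_def finite_PiE card_PiE numeral_3_eq_3)
  moreover have "card (neighbour ` Z) \<le> card Z"
    using \<open>finite Z\<close> by (rule card_image_le)
  ultimately show ?thesis
    using card_mono[of "neighbour ` Z" A] finite_subset[of A "neighbour ` Z"] by auto
qed

lemma SD_sq_le_S3D_sq: "SD_sq D f j x \<le> S3D_sq D f j x"
  unfolding SD_sq_def S3D_sq_def
  by (intro infsum_mono infsum_mono_set_ennreal) (auto dest: subset_trans[OF _ cube_set_subset_triple])

lemma S3D_sq_le_SD_sq: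
  fixes f :: "real^'n::finite \<Rightarrow> real"
  shows "S3D_sq (dyadic_grid_of \<omega>) f j x \<le> ennreal (3 ^ CARD('n)) * SD_sq (dyadic_grid_of \<omega>) f j x"
proof -
  have "S3D_sq (dyadic_grid_of \<omega>) f j x \<le> of_nat (3 ^ CARD('n)) * SD_sq (dyadic_grid_of \<omega>) f j x"
    unfolding S3D_sq_def SD_sq_def side_eq_powr_iff
    by (rule infsum_double_counting_le_ennreal[OF card_triple_ancestors_le dyadic_grid_of_ancestor])
  then show ?thesis by (simp add: ennreal_of_nat_eq_real_of_nat)
qed

theorem proposition8p2:
  fixes D :: "'n::finite dcube set" and f :: "real^'n \<Rightarrow> real" and j :: nat and x :: "real^'n"
  assumes "is_dyadic_grid D"
    and "f \<in> borel_measurable lebesgue"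
    and "integrable lebesgue (\<lambda>y. (f y)\<^sup>2)"
  shows "SD D f j x \<le> S3D D f j x \<and>
         S3D D f j x \<le> ennreal (3 powr (real CARD('n) / 2)) * SD D f j x"
proof -
  obtain \<omega> where D: "D = dyadic_grid_of \<omega>"
    using assms(1) unfolding is_dyadic_grid_def by blast
  have "S3D_sq D f j x \<le> ennreal (3 ^ CARD('n)) * SD_sq D f j x"
    unfolding D by (rule S3D_sq_le_SD_sq)
  then have "S3D D f j x \<le> enn_sqrt (ennreal (3 ^ CARD('n)) * SD_sq D f j x)"
    unfolding S3D_def by (rule enn_sqrt_mono)
  also have "\<dots> = ennreal (sqrt (3 ^ CARD('n))) * SD D f j x"
    unfolding SD_def by (simp add: enn_sqrt_cmult)
  also have "sqrt (3 ^ CARD('n)) = 3 powr (real CARD('n) / 2)"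
    by (simp add: powr_half_sqrt[symmetric] powr_realpow[symmetric] powr_powr)
  finally show ?thesis
    using enn_sqrt_mono[OF SD_sq_le_S3D_sq] by (simp add: SD_def S3D_def)
qed

end
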